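(* Let $G=(\mathcal{V},\mathcal{E})$ be a directed graph with start $s_0$, goal region $\mathcal{G}$, true edge costs $c^t$ and lazy edge costs $c^l\le c^t$, and let $c^*$ be the cost (with respect to $c^t$) of an optimal path from $s_0$ to $\mathcal{G}$ in $G$. In any iteration $i$ of MPLP, the path $\pi_i$ computed by the weighted A* search (ComputePath) of that iteration satisfies $\mathrm{cost}(\pi_i)\le \epsilon^h\cdot c^*$, where $\mathrm{cost}(\pi_i)$ is the cost of $\pi_i$ in the intermediate graph $G_i$ used by that search and $\epsilon^h\ge1$ is the heuristic inflation factor.
   Context: Each edge $e$ of $G$ has a true cost $c^t(e)\in[0,\infty]$ computed by an expensive evaluation routine and a cheap lazy cost $c^l(e)\le c^t(e)$. MPLP repeatedly runs a weighted A* search (ComputePath) with an admissible heuristic inflated by a factor $\epsilon^h\ge1$ on an intermediate graph $G_i$: $G_i$ has the same vertices and edges as $G$, with each edge's cost equal to its true cost if the edge has already been evaluated (by evaluation threads running asynchronously in parallel with the search) and equal to its lazy cost otherwise. Weighted A* with inflation $\epsilon^h$ on a graph returns a path whose cost is at most $\epsilon^h$ times the optimal path cost in that graph. *)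

theory Defs
  imports "HOL-Library.Extended_Nonnegative_Real"
begin

definition is_path :: "'v set \<Rightarrow> ('v \<times> 'v) set \<Rightarrow> 'v \<Rightarrow> 'v set \<Rightarrow> 'v list \<Rightarrow> bool" where
  "is_path V E s0 Goal p \<longleftrightarrow>
     p \<noteq> [] \<and> hd p = s0 \<and> last p \<in> Goal \<and> set p \<subseteq> V \<and>
     (\<forall>k. Suc k < length p \<longrightarrow> (p ! k, p ! Suc k) \<in> E)"

definition path_cost :: "('v \<times> 'v \<Rightarrow> ennreal) \<Rightarrow> 'v list \<Rightarrow> ennreal" where
  "path_cost c p = (\<Sum>k<length p - 1. c (p ! k, p ! Suc k))"

text \<open>Optimal cost of a path from s0 to Goal w.r.t. cost function c (\<infinity> if none).\<close>
definition opt_cost :: "'v set \<Rightarrow> ('v \<times> 'v) set \<Rightarrow> 'v \<Rightarrow> 'v set \<Rightarrow> ('v \<times> 'v \<Rightarrow> ennreal) \<Rightarrow> ennreal" where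
  "opt_cost V E s0 Goal c = (INF p \<in> {p. is_path V E s0 Goal p}. path_cost c p)"

text \<open>Edge costs of the intermediate graph G_i: true cost on already evaluated edges,
lazy cost otherwise.\<close>
definition inter_cost :: "('v \<times> 'v) set \<Rightarrow> ('v \<times> 'v \<Rightarrow> ennreal) \<Rightarrow> ('v \<times> 'v \<Rightarrow> ennreal) \<Rightarrow> 'v \<times> 'v \<Rightarrow> ennreal" where
  "inter_cost Ev ct cl e = (if e \<in> Ev then ct e else cl e)"

end

theory Submission
  imports Defs
begin

(* Lazy costs never exceed true costs, so every edge of G_i is at most as expensive as in G
   and the optimum of G_i is at most c*; the weighted A* guarantee in G_i then yields the bound. *)

lemma path_cost_mono_on_edges:
  assumes "\<And>k. Suc k < length p \<Longrightarrow> c (p ! k, p ! Suc k) \<le> c' (p ! k, p ! Suc k)"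
  shows "path_cost c p \<le> path_cost c' p"
  unfolding path_cost_def using assms by (intro sum_mono) auto

lemma opt_cost_mono:
  assumes "\<And>e. e \<in> E \<Longrightarrow> c e \<le> c' e"
  shows "opt_cost V E s0 Goal c \<le> opt_cost V E s0 Goal c'"
  unfolding opt_cost_def
proof (rule INF_mono)
  fix p assume "p \<in> {p. is_path V E s0 Goal p}"
  then have "path_cost c p \<le> path_cost c' p"
    by (intro path_cost_mono_on_edges assms) (simp add: is_path_def)
  then show "\<exists>q\<in>{p. is_path V E s0 Goal p}. path_cost c q \<le> path_cost c' p"
    using \<open>p \<in> _\<close> by blast
qed

lemma inter_cost_le_true_cost:
  assumes "cl e \<le> ct e"
  shows "inter_cost Ev ct cl e \<le> ct e"
  using assms by (simp add: inter_cost_def)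

theorem lemma1:
  fixes V :: "'v set" and E :: "('v \<times> 'v) set" and s0 :: 'v and Goal :: "'v set"
    and ct cl :: "'v \<times> 'v \<Rightarrow> ennreal" and eps :: real
    and Ev :: "('v \<times> 'v) set" and \<pi> :: "'v list"
  assumes graph: "E \<subseteq> V \<times> V" "s0 \<in> V" "Goal \<subseteq> V"
    and lazy_le: "\<And>e. e \<in> E \<Longrightarrow> cl e \<le> ct e"
    and eval_sub: "Ev \<subseteq> E"
    and eps_ge: "eps \<ge> 1"
    and wastar_path: "is_path V E s0 Goal \<pi>"
    and wastar_bound: "path_cost (inter_cost Ev ct cl) \<pi>
                         \<le> ennreal eps * opt_cost V E s0 Goal (inter_cost Ev ct cl)"
  shows "path_cost (inter_cost Ev ct cl) \<pi> \<le> ennreal eps * opt_cost V E s0 Goal ct"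
proof -
  have "opt_cost V E s0 Goal (inter_cost Ev ct cl) \<le> opt_cost V E s0 Goal ct"
    by (intro opt_cost_mono inter_cost_le_true_cost lazy_le)
  then have "ennreal eps * opt_cost V E s0 Goal (inter_cost Ev ct cl)
               \<le> ennreal eps * opt_cost V E s0 Goal ct"
    by (rule mult_left_mono) simp
  with wastar_bound show ?thesis
    by (rule order_trans)
qed

end
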